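(* Let $(\mathcal E,S,\Theta_A(\mathcal E))$ and $(\mathcal F,T,\Theta_A(\mathcal F))$ be right functional $A$-modules and $(X,f)$ a functional module homomorphism between them with $X$ surjective. Then $(X,f)$ induces a ring homomorphism $\sigma\colon\mathcal K_A(\mathcal E)\to\mathcal K_A(\mathcal F)$, and $f$ is injective. If $(X,f)$ is an isomorphism (i.e. $X$ and $f$ are bijective), then $\sigma$ is an isomorphism and extends to an isomorphism $\mathcal L_A(\mathcal E)\to\mathcal L_A(\mathcal F)$.
   Context: $G$ is a discrete group; $(A,\alpha)$ is an associative ring (not necessarily commutative or unital) with $G$-action. A right functional $A$-module is a right $A$-module $\mathcal E$ with a $G$-action $S$ by additive bijections with $S_g(\xi a)=S_g(\xi)\alpha_g(a)$, together with a functional space $\Theta_A(\mathcal E)\subseteq\mathrm{Hom}_A(\mathcal E,A)$ which is a left $A$-submodule ($(a\varphi)(\xi)=a\varphi(\xi)$) invariant under $\varphi\mapsto\alpha_g\circ\varphi\circ S_{g^{-1}}$. The compact operators $\mathcal K_A(\mathcal E)$ are the finite sums of $\theta_{\eta,\varphi}(\xi)=\eta\varphi(\xi)$ ($\eta\in\mathcal E$, $\varphi\in\Theta_A(\mathcal E)$); the adjointable operators $\mathcal L_A(\mathcal E)$ are the $V\in\mathrm{Hom}_A(\mathcal E,\mathcal E)$ with $\varphi\circ V\in\Theta_A(\mathcal E)$ for all $\varphi\in\Theta_A(\mathcal E)$. A functional module homomorphism $(X,f)$ from $\mathcal E$ to $\mathcal F$ consists of a $G$-equivariant right $A$-module homomorphism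 $X\colon\mathcal E\to\mathcal F$ and a $G$-equivariant left $A$-module homomorphism $f\colon\Theta_A(\mathcal E)\to\Theta_A(\mathcal F)$ such that $f(\varphi)(X(\xi))=\varphi(\xi)$ for all $\varphi\in\Theta_A(\mathcal E)$, $\xi\in\mathcal E$. *)

theory Defs
  imports Main
begin

text \<open>The discrete group G is a type of class group_add (written additively:
  0 is the unit, g + h the product, -g the inverse).\<close>

definition ring_action :: "('g::group_add \<Rightarrow> 'a::ring \<Rightarrow> 'a) \<Rightarrow> bool" where
  "ring_action \<alpha> \<longleftrightarrow>
     (\<forall>g. bij (\<alpha> g) \<and> (\<forall>a b. \<alpha> g (a + b) = \<alpha> g a + \<alpha> g b \<and> \<alpha> g (a * b) = \<alpha> g a * \<alpha> g b))
     \<and> \<alpha> 0 = id \<and> (\<forall>g h. \<alpha> (g + h) = \<alpha> g \<circ> \<alpha> h)"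

definition right_module :: "('e::ab_group_add \<Rightarrow> 'a::ring \<Rightarrow> 'e) \<Rightarrow> bool" where
  "right_module m \<longleftrightarrow>
     (\<forall>x y a. m (x + y) a = m x a + m y a) \<and>
     (\<forall>x a b. m x (a + b) = m x a + m x b) \<and>
     (\<forall>x a b. m x (a * b) = m (m x a) b)"

definition module_hom ::
  "('e::ab_group_add \<Rightarrow> 'a::ring \<Rightarrow> 'e) \<Rightarrow> ('f::ab_group_add \<Rightarrow> 'a \<Rightarrow> 'f) \<Rightarrow> ('e \<Rightarrow> 'f) \<Rightarrow> bool" where
  "module_hom mE mF X \<longleftrightarrow>
     (\<forall>x y. X (x + y) = X x + X y) \<and> (\<forall>x a. X (mE x a) = mF (X x) a)"

text \<open>Right functional A-module (E, S, Theta): m is the right A-action, S the G-action,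
  Theta the functional space, a subset of Hom_A(E,A) (A as right module over itself).\<close>
definition functional_module ::
  "('g::group_add \<Rightarrow> 'a::ring \<Rightarrow> 'a) \<Rightarrow> ('e::ab_group_add \<Rightarrow> 'a \<Rightarrow> 'e) \<Rightarrow> ('g \<Rightarrow> 'e \<Rightarrow> 'e)
    \<Rightarrow> ('e \<Rightarrow> 'a) set \<Rightarrow> bool" where
  "functional_module \<alpha> m S \<Theta> \<longleftrightarrow>
     right_module m \<and>
     (\<forall>g. bij (S g) \<and> (\<forall>x y. S g (x + y) = S g x + S g y) \<and> (\<forall>x a. S g (m x a) = m (S g x) (\<alpha> g a)))
     \<and> S 0 = id \<and> (\<forall>g h. S (g + h) = S g \<circ> S h)
     \<and> (\<forall>\<phi>\<in>\<Theta>. module_hom m (*) \<phi>)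
     \<and> (\<lambda>_. 0) \<in> \<Theta>
     \<and> (\<forall>\<phi>\<in>\<Theta>. \<forall>\<psi>\<in>\<Theta>. (\<lambda>x. \<phi> x + \<psi> x) \<in> \<Theta>)
     \<and> (\<forall>\<phi>\<in>\<Theta>. (\<lambda>x. - \<phi> x) \<in> \<Theta>)
     \<and> (\<forall>a. \<forall>\<phi>\<in>\<Theta>. (\<lambda>x. a * \<phi> x) \<in> \<Theta>)
     \<and> (\<forall>g. \<forall>\<phi>\<in>\<Theta>. \<alpha> g \<circ> \<phi> \<circ> S (- g) \<in> \<Theta>)"

definition theta_op :: "('e \<Rightarrow> 'a \<Rightarrow> 'e) \<Rightarrow> 'e \<Rightarrow> ('e \<Rightarrow> 'a) \<Rightarrow> 'e \<Rightarrow> 'e" where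
  "theta_op m \<eta> \<phi> = (\<lambda>\<xi>. m \<eta> (\<phi> \<xi>))"

definition compacts :: "('e::ab_group_add \<Rightarrow> 'a \<Rightarrow> 'e) \<Rightarrow> ('e \<Rightarrow> 'a) set \<Rightarrow> ('e \<Rightarrow> 'e) set" where
  "compacts m \<Theta> = {V. \<exists>(n::nat) \<eta> \<phi>. (\<forall>i<n. \<phi> i \<in> \<Theta>) \<and>
                        V = (\<lambda>\<xi>. \<Sum>i<n. theta_op m (\<eta> i) (\<phi> i) \<xi>)}"

definition adjointables :: "('e::ab_group_add \<Rightarrow> 'a::ring \<Rightarrow> 'e) \<Rightarrow> ('e \<Rightarrow> 'a) set \<Rightarrow> ('e \<Rightarrow> 'e) set" where
  "adjointables m \<Theta> = {V. module_hom m m V \<and> (\<forall>\<phi>\<in>\<Theta>. \<phi> \<circ> V \<in> \<Theta>)}"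

definition op_ring_hom :: "('e::plus \<Rightarrow> 'e) set \<Rightarrow> ('f::plus \<Rightarrow> 'f) set \<Rightarrow> (('e \<Rightarrow> 'e) \<Rightarrow> ('f \<Rightarrow> 'f)) \<Rightarrow> bool" where
  "op_ring_hom K K' \<sigma> \<longleftrightarrow> \<sigma> ` K \<subseteq> K' \<and>
     (\<forall>U\<in>K. \<forall>V\<in>K. \<sigma> (\<lambda>\<xi>. U \<xi> + V \<xi>) = (\<lambda>\<zeta>. \<sigma> U \<zeta> + \<sigma> V \<zeta>) \<and> \<sigma> (U \<circ> V) = \<sigma> U \<circ> \<sigma> V)"

definition functional_module_hom ::
  "('g::group_add \<Rightarrow> 'a::ring \<Rightarrow> 'a) \<Rightarrow> ('e::ab_group_add \<Rightarrow> 'a \<Rightarrow> 'e) \<Rightarrow> ('g \<Rightarrow> 'e \<Rightarrow> 'e) \<Rightarrow> ('e \<Rightarrow> 'a) set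
    \<Rightarrow> ('f::ab_group_add \<Rightarrow> 'a \<Rightarrow> 'f) \<Rightarrow> ('g \<Rightarrow> 'f \<Rightarrow> 'f) \<Rightarrow> ('f \<Rightarrow> 'a) set
    \<Rightarrow> ('e \<Rightarrow> 'f) \<Rightarrow> (('e \<Rightarrow> 'a) \<Rightarrow> ('f \<Rightarrow> 'a)) \<Rightarrow> bool" where
  "functional_module_hom \<alpha> mE S \<Theta>E mF T \<Theta>F X f \<longleftrightarrow>
     module_hom mE mF X \<and> (\<forall>g \<xi>. X (S g \<xi>) = T g (X \<xi>))
     \<and> f ` \<Theta>E \<subseteq> \<Theta>F
     \<and> (\<forall>\<phi>\<in>\<Theta>E. \<forall>\<psi>\<in>\<Theta>E. f (\<lambda>x. \<phi> x + \<psi> x) = (\<lambda>y. f \<phi> y + f \<psi> y))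
     \<and> (\<forall>a. \<forall>\<phi>\<in>\<Theta>E. f (\<lambda>x. a * \<phi> x) = (\<lambda>y. a * f \<phi> y))
     \<and> (\<forall>g. \<forall>\<phi>\<in>\<Theta>E. f (\<alpha> g \<circ> \<phi> \<circ> S (- g)) = \<alpha> g \<circ> f \<phi> \<circ> T (- g))
     \<and> (\<forall>\<phi>\<in>\<Theta>E. \<forall>\<xi>. f \<phi> (X \<xi>) = \<phi> \<xi>)"

end

theory Submission
  imports Defs
begin

text \<open>The induced map is transport of operators along X, \<open>\<sigma> V = X \<circ> V \<circ> X\<inverse>\<close> with
  \<open>X\<inverse> = inv X\<close> a right inverse of X. From \<open>f \<phi> \<circ> X = \<phi>\<close>, every functional in \<open>\<Theta>E\<close>, and
  hence every compact operator, is constant on the fibres of X: this makes \<sigma> multiplicative on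
  compacts, sends \<open>\<theta>(\<eta>, \<phi>)\<close> to \<open>\<theta>(X \<eta>, f \<phi>)\<close> and forces f to be injective. If X and f are
  bijective, the inverse pair \<open>(X\<inverse>, f\<inverse>)\<close> satisfies the same hypotheses, so transport along
  \<open>X\<inverse>\<close> inverts \<sigma> on compact and on adjointable operators.\<close>

definition transport_op :: "('e \<Rightarrow> 'f) \<Rightarrow> ('e \<Rightarrow> 'e) \<Rightarrow> 'f \<Rightarrow> 'f" where
  "transport_op X V = (\<lambda>\<zeta>. X (V (inv X \<zeta>)))"

lemma transport_op_add:
  assumes "\<And>x y. X (x + y) = X x + X y"
  shows "transport_op X (\<lambda>\<xi>. U \<xi> + V \<xi>) = (\<lambda>\<zeta>. transport_op X U \<zeta> + transport_op X V \<zeta>)"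
  by (simp add: transport_op_def assms)

lemma transport_op_sum:
  fixes X :: "'e::ab_group_add \<Rightarrow> 'f::ab_group_add"
  assumes "\<And>x y. X (x + y) = X x + X y"
  shows "transport_op X (\<lambda>\<xi>. \<Sum>i<n. V i \<xi>) = (\<lambda>\<zeta>. \<Sum>i<n. transport_op X (V i) \<zeta>)"
proof -
  have "X 0 = 0" using assms[of 0 0] by simp
  then show ?thesis
    by (simp add: transport_op_def sum_comp_morphism[of X, OF _ assms, symmetric] comp_def)
qed

lemma transport_op_comp:
  assumes "\<And>\<xi>. U (inv X (X \<xi>)) = U \<xi>"
  shows "transport_op X (U \<circ> V) = transport_op X U \<circ> transport_op X V"
  by (simp add: transport_op_def fun_eq_iff assms)

locale surj_functional_hom =
  fixes mE :: "'e::ab_group_add \<Rightarrow> 'a::ring \<Rightarrow> 'e" and \<Theta>E :: "('e \<Rightarrow> 'a) set"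
    and mF :: "'f::ab_group_add \<Rightarrow> 'a \<Rightarrow> 'f" and \<Theta>F :: "('f \<Rightarrow> 'a) set"
    and X :: "'e \<Rightarrow> 'f" and f :: "('e \<Rightarrow> 'a) \<Rightarrow> ('f \<Rightarrow> 'a)"
  assumes X_hom: "module_hom mE mF X"
    and f_into: "f ` \<Theta>E \<subseteq> \<Theta>F"
    and f_X: "\<phi> \<in> \<Theta>E \<Longrightarrow> f \<phi> (X \<xi>) = \<phi> \<xi>"
    and surj_X: "surj X"
begin

lemma X_add: "X (x + y) = X x + X y"
  using X_hom by (simp add: module_hom_def)

lemma X_scale: "X (mE x a) = mF (X x) a"
  using X_hom by (simp add: module_hom_def)

lemma f_eq_comp_inv: "\<phi> \<in> \<Theta>E \<Longrightarrow> f \<phi> = \<phi> \<circ> inv X"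
  using f_X surj_f_inv_f[OF surj_X] by (metis comp_apply ext)

lemma inj_on_f: "inj_on f \<Theta>E"
proof (rule inj_onI)
  fix \<phi> \<psi> assume "\<phi> \<in> \<Theta>E" "\<psi> \<in> \<Theta>E" "f \<phi> = f \<psi>"
  then show "\<phi> = \<psi>" using f_X by (metis ext)
qed

lemma functional_inv_X_X: "\<phi> \<in> \<Theta>E \<Longrightarrow> \<phi> (inv X (X \<xi>)) = \<phi> \<xi>"
  by (metis f_X surj_X surj_f_inv_f)

lemma compact_inv_X_X:
  assumes "V \<in> compacts mE \<Theta>E"
  shows "V (inv X (X \<xi>)) = V \<xi>"
  using assms by (auto simp: compacts_def theta_op_def functional_inv_X_X intro: sum.cong)

lemma transport_op_theta:
  assumes "\<phi> \<in> \<Theta>E"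
  shows "transport_op X (theta_op mE \<eta> \<phi>) = theta_op mF (X \<eta>) (f \<phi>)"
  using assms by (simp add: transport_op_def theta_op_def X_scale f_eq_comp_inv)

lemma transport_op_theta_sum:
  assumes "\<forall>i<n. \<phi> i \<in> \<Theta>E"
  shows "transport_op X (\<lambda>\<xi>. \<Sum>i<n. theta_op mE (\<eta> i) (\<phi> i) \<xi>)
       = (\<lambda>\<zeta>. \<Sum>i<n. theta_op mF (X (\<eta> i)) (f (\<phi> i)) \<zeta>)"
  using assms by (simp add: transport_op_sum[OF X_add] transport_op_theta)

lemma transport_op_compacts:
  assumes "V \<in> compacts mE \<Theta>E"
  shows "transport_op X V \<in> compacts mF \<Theta>F"
proof -
  obtain n \<eta> \<phi> where \<phi>: "\<forall>i<(n::nat). \<phi> i \<in> \<Theta>E"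
    and V: "V = (\<lambda>\<xi>. \<Sum>i<n. theta_op mE (\<eta> i) (\<phi> i) \<xi>)"
    using assms unfolding compacts_def by blast
  have "\<forall>i<n. f (\<phi> i) \<in> \<Theta>F" using \<phi> f_into by blast
  then show ?thesis
    unfolding V transport_op_theta_sum[OF \<phi>] compacts_def
    by (intro CollectI exI[of _ n] exI[of _ "\<lambda>i. X (\<eta> i)"] exI[of _ "\<lambda>i. f (\<phi> i)"]) simp
qed

lemma op_ring_hom_transport_op_compacts:
  "op_ring_hom (compacts mE \<Theta>E) (compacts mF \<Theta>F) (transport_op X)"
  unfolding op_ring_hom_def
  by (simp add: image_subsetI transport_op_compacts transport_op_add X_add
      transport_op_comp compact_inv_X_X)

end

locale bij_functional_hom = surj_functional_hom +
  assumes bij_X: "bij X"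
    and bij_f: "bij_betw f \<Theta>E \<Theta>F"
begin

lemma inv_X_X [simp]: "inv X (X x) = x"
  using bij_X by (simp add: bij_is_inj)

lemma X_inv_X [simp]: "X (inv X y) = y"
  using surj_X by (simp add: surj_f_inv_f)

lemma inv_X_hom: "module_hom mF mE (inv X)"
  unfolding module_hom_def
  by (metis X_add X_scale X_inv_X inv_X_X)

lemma bij_functional_hom_inverse: "bij_functional_hom mF \<Theta>F mE \<Theta>E (inv X) (inv_into \<Theta>E f)"
proof
  show "module_hom mF mE (inv X)" by (rule inv_X_hom)
  show "inv_into \<Theta>E f ` \<Theta>F \<subseteq> \<Theta>E" "bij_betw (inv_into \<Theta>E f) \<Theta>F \<Theta>E"
    using bij_betw_inv_into[OF bij_f] by (auto simp: bij_betw_def)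
  show "surj (inv X)" "bij (inv X)"
    using bij_X bij_imp_bij_inv bij_is_surj by blast+
next
  fix \<psi> \<zeta> assume "\<psi> \<in> \<Theta>F"
  then show "inv_into \<Theta>E f \<psi> (inv X \<zeta>) = \<psi> \<zeta>"
    using bij_f f_eq_comp_inv
    by (metis bij_betw_inv_into_right bij_betw_apply bij_betw_inv_into comp_apply)
qed

lemma transport_op_inverse: "transport_op (inv X) (transport_op X V) = V"
  using bij_X by (simp add: transport_op_def inv_inv_eq)

lemma transport_op_adjointables:
  assumes "V \<in> adjointables mE \<Theta>E"
  shows "transport_op X V \<in> adjointables mF \<Theta>F"
proof -
  have V_hom: "module_hom mE mE V" and V_func: "\<And>\<phi>. \<phi> \<in> \<Theta>E \<Longrightarrow> \<phi> \<circ> V \<in> \<Theta>E"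
    using assms by (auto simp: adjointables_def)
  have "module_hom mF mF (transport_op X V)"
    using V_hom inv_X_hom by (simp add: module_hom_def transport_op_def X_add X_scale)
  moreover have "\<psi> \<circ> transport_op X V \<in> \<Theta>F" if "\<psi> \<in> \<Theta>F" for \<psi>
  proof -
    obtain \<phi> where \<phi>: "\<phi> \<in> \<Theta>E" "\<psi> = f \<phi>"
      using \<open>\<psi> \<in> \<Theta>F\<close> bij_f by (auto simp: bij_betw_def)
    have "\<psi> \<circ> transport_op X V = f (\<phi> \<circ> V)"
      using \<phi> V_func by (simp add: f_eq_comp_inv transport_op_def comp_def)
    then show ?thesis using f_into V_func \<phi>(1) by blast
  qed
  ultimately show ?thesis by (simp add: adjointables_def)
qed

lemma op_ring_hom_transport_op_adjointables:
  "op_ring_hom (adjointables mE \<Theta>E) (adjointables mF \<Theta>F) (transport_op X)"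
  unfolding op_ring_hom_def
  by (simp add: image_subsetI transport_op_adjointables transport_op_add X_add transport_op_comp)

lemma bij_betw_transport_op:
  assumes "transport_op X ` A \<subseteq> B" and "transport_op (inv X) ` B \<subseteq> A"
  shows "bij_betw (transport_op X) A B"
proof (rule bij_betw_byWitness[OF _ _ assms])
  show "\<forall>V\<in>A. transport_op (inv X) (transport_op X V) = V"
    by (simp add: transport_op_inverse)
  show "\<forall>W\<in>B. transport_op X (transport_op (inv X) W) = W"
    using bij_functional_hom.transport_op_inverse[OF bij_functional_hom_inverse] bij_X
    by (simp add: inv_inv_eq)
qed

lemma bij_betw_transport_op_compacts:
  "bij_betw (transport_op X) (compacts mE \<Theta>E) (compacts mF \<Theta>F)"
  using transport_op_compacts
    surj_functional_hom.transport_op_compacts[OF bij_functional_hom.axioms(1)[OF bij_functional_hom_inverse]]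
  by (auto intro: bij_betw_transport_op)

lemma bij_betw_transport_op_adjointables:
  "bij_betw (transport_op X) (adjointables mE \<Theta>E) (adjointables mF \<Theta>F)"
  using transport_op_adjointables
    bij_functional_hom.transport_op_adjointables[OF bij_functional_hom_inverse]
  by (auto intro: bij_betw_transport_op)

end

theorem lemma2p8:
  fixes \<alpha> :: "'g::group_add \<Rightarrow> 'a::ring \<Rightarrow> 'a"
    and mE :: "'e::ab_group_add \<Rightarrow> 'a \<Rightarrow> 'e" and S :: "'g \<Rightarrow> 'e \<Rightarrow> 'e" and \<Theta>E :: "('e \<Rightarrow> 'a) set"
    and mF :: "'f::ab_group_add \<Rightarrow> 'a \<Rightarrow> 'f" and T :: "'g \<Rightarrow> 'f \<Rightarrow> 'f" and \<Theta>F :: "('f \<Rightarrow> 'a) set"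
    and X :: "'e \<Rightarrow> 'f" and f :: "('e \<Rightarrow> 'a) \<Rightarrow> ('f \<Rightarrow> 'a)"
  assumes "ring_action \<alpha>"
    and "functional_module \<alpha> mE S \<Theta>E"
    and "functional_module \<alpha> mF T \<Theta>F"
    and "functional_module_hom \<alpha> mE S \<Theta>E mF T \<Theta>F X f"
    and "surj X"
  shows "\<exists>\<sigma>. op_ring_hom (compacts mE \<Theta>E) (compacts mF \<Theta>F) \<sigma>
            \<and> (\<forall>\<eta>. \<forall>\<phi>\<in>\<Theta>E. \<sigma> (theta_op mE \<eta> \<phi>) = theta_op mF (X \<eta>) (f \<phi>))
            \<and> inj_on f \<Theta>E
            \<and> (bij X \<and> bij_betw f \<Theta>E \<Theta>F \<longrightarrow>
                 bij_betw \<sigma> (compacts mE \<Theta>E) (compacts mF \<Theta>F)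
                 \<and> (\<exists>\<tau>. op_ring_hom (adjointables mE \<Theta>E) (adjointables mF \<Theta>F) \<tau>
                        \<and> bij_betw \<tau> (adjointables mE \<Theta>E) (adjointables mF \<Theta>F)
                        \<and> (\<forall>V\<in>compacts mE \<Theta>E. \<tau> V = \<sigma> V)))"
proof -
  interpret surj_functional_hom mE \<Theta>E mF \<Theta>F X f
    using assms(4,5) by unfold_locales (auto simp: functional_module_hom_def)
  have "bij_betw (transport_op X) (compacts mE \<Theta>E) (compacts mF \<Theta>F)
      \<and> op_ring_hom (adjointables mE \<Theta>E) (adjointables mF \<Theta>F) (transport_op X)
      \<and> bij_betw (transport_op X) (adjointables mE \<Theta>E) (adjointables mF \<Theta>F)"
    if "bij X" "bij_betw f \<Theta>E \<Theta>F"
  proof -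
    interpret bij_functional_hom mE \<Theta>E mF \<Theta>F X f
      using that by unfold_locales
    show ?thesis
      using bij_betw_transport_op_compacts op_ring_hom_transport_op_adjointables
        bij_betw_transport_op_adjointables by blast
  qed
  then show ?thesis
    using op_ring_hom_transport_op_compacts transport_op_theta inj_on_f by blast
qed

end
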